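(* Let $\mathcal{A}$ be an Ershov $\mathcal{C}$-algebra. If $\mathcal{A}$ is weakly equationally Noetherian, then every subset of $\mathcal{C}$ that is bounded above in $\mathcal{A}$ has a supremum in $\mathcal{A}$, and this supremum belongs to $\mathcal{C}$.
   Context: An Ershov algebra is a structure $\langle A; \vee, \wedge, \setminus, 0\rangle$ such that $\langle A;\vee,\wedge\rangle$ is a distributive lattice with least element $0$, and $b \setminus a$ is the relative complement: the unique $z$ with $z \wedge a = 0$ and $z \vee a = a \vee b$. An Ershov $\mathcal{C}$-algebra is an Ershov algebra $\mathcal{A}$ together with a distinguished subalgebra $\mathcal{C}$ whose elements are added as constant symbols; $\mathcal{L}$ is the language $\{\vee,\wedge,\setminus,0\}$ plus these constants. An equation is $t(\bar x)=s(\bar x)$ with $t,s$ terms of $\mathcal{L}$. Two systems of equations are equivalent over $\mathcal{A}$ if they have the same solution set. $\mathcal{A}$ is weakly equationally Noetherian if every system of equations (possibly infinite) in finitely many variables is equivalent over $\mathcal{A}$ to some finite system of equations of $\mathcal{L}$. *)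

theory Defs
  imports Main
begin

text \<open>Ershov algebras, given on a carrier set A with operations
  jn (join), mt (meet), df (relative complement b \ a written df b a) and zero z.\<close>

definition ershov_algebra ::
  "'a set \<Rightarrow> ('a \<Rightarrow> 'a \<Rightarrow> 'a) \<Rightarrow> ('a \<Rightarrow> 'a \<Rightarrow> 'a) \<Rightarrow> ('a \<Rightarrow> 'a \<Rightarrow> 'a) \<Rightarrow> 'a \<Rightarrow> bool" where
  "ershov_algebra A jn mt df z \<longleftrightarrow>
     z \<in> A \<and>
     (\<forall>x\<in>A. \<forall>y\<in>A. jn x y \<in> A \<and> mt x y \<in> A \<and> df x y \<in> A) \<and>
     (\<forall>x\<in>A. \<forall>y\<in>A. \<forall>w\<in>A. jn (jn x y) w = jn x (jn y w) \<and> mt (mt x y) w = mt x (mt y w)) \<and>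
     (\<forall>x\<in>A. \<forall>y\<in>A. jn x y = jn y x \<and> mt x y = mt y x) \<and>
     (\<forall>x\<in>A. \<forall>y\<in>A. jn x (mt x y) = x \<and> mt x (jn x y) = x) \<and>
     (\<forall>x\<in>A. \<forall>y\<in>A. \<forall>w\<in>A. mt x (jn y w) = jn (mt x y) (mt x w)) \<and>
     (\<forall>x\<in>A. jn z x = x) \<and>
     (\<forall>a\<in>A. \<forall>b\<in>A. mt (df b a) a = z \<and> jn (df b a) a = jn a b)"

definition ershov_subalgebra ::
  "'a set \<Rightarrow> 'a set \<Rightarrow> ('a \<Rightarrow> 'a \<Rightarrow> 'a) \<Rightarrow> ('a \<Rightarrow> 'a \<Rightarrow> 'a) \<Rightarrow> ('a \<Rightarrow> 'a \<Rightarrow> 'a) \<Rightarrow> 'a \<Rightarrow> bool" where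
  "ershov_subalgebra C A jn mt df z \<longleftrightarrow>
     C \<subseteq> A \<and> z \<in> C \<and> (\<forall>x\<in>C. \<forall>y\<in>C. jn x y \<in> C \<and> mt x y \<in> C \<and> df x y \<in> C)"

datatype 'a trm = Var nat | Cst 'a | Zero | Join "'a trm" "'a trm"
  | Meet "'a trm" "'a trm" | Diff "'a trm" "'a trm"

fun vars_trm :: "'a trm \<Rightarrow> nat set" where
  "vars_trm (Var i) = {i}"
| "vars_trm (Cst c) = {}"
| "vars_trm Zero = {}"
| "vars_trm (Join s t) = vars_trm s \<union> vars_trm t"
| "vars_trm (Meet s t) = vars_trm s \<union> vars_trm t"
| "vars_trm (Diff s t) = vars_trm s \<union> vars_trm t"

fun consts_trm :: "'a trm \<Rightarrow> 'a set" where
  "consts_trm (Var i) = {}"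
| "consts_trm (Cst c) = {c}"
| "consts_trm Zero = {}"
| "consts_trm (Join s t) = consts_trm s \<union> consts_trm t"
| "consts_trm (Meet s t) = consts_trm s \<union> consts_trm t"
| "consts_trm (Diff s t) = consts_trm s \<union> consts_trm t"

fun eval_trm ::
  "('a \<Rightarrow> 'a \<Rightarrow> 'a) \<Rightarrow> ('a \<Rightarrow> 'a \<Rightarrow> 'a) \<Rightarrow> ('a \<Rightarrow> 'a \<Rightarrow> 'a) \<Rightarrow> 'a \<Rightarrow> 'a list \<Rightarrow> 'a trm \<Rightarrow> 'a" where
  "eval_trm jn mt df z xs (Var i) = xs ! i"
| "eval_trm jn mt df z xs (Cst c) = c"
| "eval_trm jn mt df z xs Zero = z"
| "eval_trm jn mt df z xs (Join s t) = jn (eval_trm jn mt df z xs s) (eval_trm jn mt df z xs t)"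
| "eval_trm jn mt df z xs (Meet s t) = mt (eval_trm jn mt df z xs s) (eval_trm jn mt df z xs t)"
| "eval_trm jn mt df z xs (Diff s t) = df (eval_trm jn mt df z xs s) (eval_trm jn mt df z xs t)"

definition is_eqn :: "'a set \<Rightarrow> nat \<Rightarrow> 'a trm \<times> 'a trm \<Rightarrow> bool" where
  "is_eqn C n e \<longleftrightarrow>
     vars_trm (fst e) \<union> vars_trm (snd e) \<subseteq> {..<n} \<and>
     consts_trm (fst e) \<union> consts_trm (snd e) \<subseteq> C"

definition solset ::
  "'a set \<Rightarrow> ('a \<Rightarrow> 'a \<Rightarrow> 'a) \<Rightarrow> ('a \<Rightarrow> 'a \<Rightarrow> 'a) \<Rightarrow> ('a \<Rightarrow> 'a \<Rightarrow> 'a) \<Rightarrow> 'a \<Rightarrow> nat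
     \<Rightarrow> ('a trm \<times> 'a trm) set \<Rightarrow> 'a list set" where
  "solset A jn mt df z n S =
     {xs. length xs = n \<and> set xs \<subseteq> A \<and>
          (\<forall>e\<in>S. eval_trm jn mt df z xs (fst e) = eval_trm jn mt df z xs (snd e))}"

definition weakly_eq_noetherian ::
  "'a set \<Rightarrow> 'a set \<Rightarrow> ('a \<Rightarrow> 'a \<Rightarrow> 'a) \<Rightarrow> ('a \<Rightarrow> 'a \<Rightarrow> 'a) \<Rightarrow> ('a \<Rightarrow> 'a \<Rightarrow> 'a) \<Rightarrow> 'a \<Rightarrow> bool" where
  "weakly_eq_noetherian A C jn mt df z \<longleftrightarrow>
     (\<forall>n S. (\<forall>e\<in>S. is_eqn C n e) \<longrightarrow>
        (\<exists>S0. finite S0 \<and> (\<forall>e\<in>S0. is_eqn C n e) \<and>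
              solset A jn mt df z n S = solset A jn mt df z n S0))"

definition ershov_le :: "('a \<Rightarrow> 'a \<Rightarrow> 'a) \<Rightarrow> 'a \<Rightarrow> 'a \<Rightarrow> bool" where
  "ershov_le jn x y \<longleftrightarrow> jn x y = y"

definition is_upper_bound :: "'a set \<Rightarrow> ('a \<Rightarrow> 'a \<Rightarrow> 'a) \<Rightarrow> 'a set \<Rightarrow> 'a \<Rightarrow> bool" where
  "is_upper_bound A jn X u \<longleftrightarrow> u \<in> A \<and> (\<forall>x\<in>X. ershov_le jn x u)"

definition is_supremum :: "'a set \<Rightarrow> ('a \<Rightarrow> 'a \<Rightarrow> 'a) \<Rightarrow> 'a set \<Rightarrow> 'a \<Rightarrow> bool" where
  "is_supremum A jn X s \<longleftrightarrow> is_upper_bound A jn X s \<and>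
     (\<forall>u. is_upper_bound A jn X u \<longrightarrow> ershov_le jn s u)"

end

theory Submission imports Defs begin

text \<open>The upper bounds of \<open>X \<subseteq> C\<close> are the solutions of the one-variable system
  \<open>{c \<or> x = x | c \<in> X}\<close>, which weak Noetherianity replaces by a finite system \<open>S\<close> with
  constants in \<open>C\<close>. A term \<open>t(x)\<close> is recovered from \<open>t(x) \<and> x\<close> and \<open>t(x) \ x\<close>; the latter
  equals \<open>t(0) \ x\<close>, and the former satisfies \<open>t(x) \<and> x = t(y) \<and> x\<close> whenever \<open>x \<le> y\<close>.
  Consequently every solution of \<open>t\<^sub>1 = t\<^sub>2\<close> lies above both relative complements of
  \<open>t\<^sub>1(0), t\<^sub>2(0) \<in> C\<close>, and every element above them and below some solution is a solution.
  The join \<open>E \<in> C\<close> of these finitely many elements over all equations of \<open>S\<close> is therefore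
  the least solution, i.e. the supremum of \<open>X\<close>.\<close>

locale ershov =
  fixes A :: "'a set" and jn mt df :: "'a \<Rightarrow> 'a \<Rightarrow> 'a" and z :: 'a
  assumes ershov_algebra: "ershov_algebra A jn mt df z"
begin

lemma zero_closed: "z \<in> A"
  and join_closed: "x \<in> A \<Longrightarrow> y \<in> A \<Longrightarrow> jn x y \<in> A"
  and meet_closed: "x \<in> A \<Longrightarrow> y \<in> A \<Longrightarrow> mt x y \<in> A"
  and diff_closed: "x \<in> A \<Longrightarrow> y \<in> A \<Longrightarrow> df x y \<in> A"
  and join_assoc: "x \<in> A \<Longrightarrow> y \<in> A \<Longrightarrow> w \<in> A \<Longrightarrow> jn (jn x y) w = jn x (jn y w)"
  and meet_assoc: "x \<in> A \<Longrightarrow> y \<in> A \<Longrightarrow> w \<in> A \<Longrightarrow> mt (mt x y) w = mt x (mt y w)"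
  and join_comm: "x \<in> A \<Longrightarrow> y \<in> A \<Longrightarrow> jn x y = jn y x"
  and meet_comm: "x \<in> A \<Longrightarrow> y \<in> A \<Longrightarrow> mt x y = mt y x"
  and join_meet_absorb: "x \<in> A \<Longrightarrow> y \<in> A \<Longrightarrow> jn x (mt x y) = x"
  and meet_join_absorb: "x \<in> A \<Longrightarrow> y \<in> A \<Longrightarrow> mt x (jn x y) = x"
  and meet_join_distrib: "x \<in> A \<Longrightarrow> y \<in> A \<Longrightarrow> w \<in> A \<Longrightarrow> mt x (jn y w) = jn (mt x y) (mt x w)"
  and zero_join: "x \<in> A \<Longrightarrow> jn z x = x"
  and diff_meet_zero: "a \<in> A \<Longrightarrow> b \<in> A \<Longrightarrow> mt (df b a) a = z"
  and diff_join: "a \<in> A \<Longrightarrow> b \<in> A \<Longrightarrow> jn (df b a) a = jn a b"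
  using ershov_algebra unfolding ershov_algebra_def by blast+

lemma join_idem: "x \<in> A \<Longrightarrow> jn x x = x"
  by (metis join_meet_absorb meet_join_absorb join_closed)

lemma meet_idem: "x \<in> A \<Longrightarrow> mt x x = x"
  by (metis join_meet_absorb meet_join_absorb meet_closed)

lemma join_zero: "x \<in> A \<Longrightarrow> jn x z = x"
  by (metis zero_join join_comm zero_closed)

lemma zero_meet: "x \<in> A \<Longrightarrow> mt z x = z"
  by (metis meet_join_absorb zero_join zero_closed)

lemma meet_zero: "x \<in> A \<Longrightarrow> mt x z = z"
  by (metis zero_meet meet_comm zero_closed)

lemma meet_join_distrib_right:
  "x \<in> A \<Longrightarrow> y \<in> A \<Longrightarrow> w \<in> A \<Longrightarrow> mt (jn y w) x = jn (mt y x) (mt w x)"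
  by (metis meet_join_distrib meet_comm join_closed)

lemma join_eq_iff_meet_eq: "x \<in> A \<Longrightarrow> y \<in> A \<Longrightarrow> jn x y = y \<longleftrightarrow> mt x y = x"
  by (metis join_meet_absorb meet_join_absorb join_comm meet_comm)

lemma meet_meet_distrib:
  "p \<in> A \<Longrightarrow> q \<in> A \<Longrightarrow> x \<in> A \<Longrightarrow> mt (mt p x) (mt q x) = mt (mt p q) x"
  by (metis meet_assoc meet_comm meet_idem meet_closed)

lemma join_join_distrib:
  assumes "p \<in> A" "q \<in> A" "x \<in> A"
  shows "jn (jn p x) (jn q x) = jn (jn p q) x"
proof -
  have "jn x (jn q x) = jn q x"
    using assms by (metis join_assoc join_comm join_idem)
  then show ?thesis
    using assms by (simp add: join_assoc join_closed)
qed

lemma join_meet_distrib: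
  assumes "x \<in> A" "y \<in> A" "w \<in> A"
  shows "jn x (mt y w) = mt (jn x y) (jn x w)"
proof -
  have "mt (jn x y) (jn x w) = jn (mt (jn x y) x) (mt (jn x y) w)"
    using assms by (simp add: meet_join_distrib join_closed)
  also have "mt (jn x y) x = x"
    using assms by (metis meet_join_absorb meet_comm join_closed)
  also have "mt (jn x y) w = jn (mt x w) (mt y w)"
    using assms by (simp add: meet_join_distrib_right)
  also have "jn x (jn (mt x w) (mt y w)) = jn (jn x (mt x w)) (mt y w)"
    using assms by (simp add: join_assoc meet_closed)
  also have "jn x (mt x w) = x"
    using assms by (simp add: join_meet_absorb)
  finally show ?thesis by simp
qed

lemma diff_unique:
  assumes ab: "a \<in> A" "b \<in> A"
    and c: "c \<in> A" "mt c a = z" "jn c a = jn a b"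
  shows "c = df b a"
proof -
  have below_b: "mt c b = c" if "c \<in> A" "mt c a = z" "jn c a = jn a b" for c
  proof -
    have "c = mt c (jn a b)"
      using that ab by (metis meet_join_absorb)
    also have "\<dots> = jn (mt c a) (mt c b)"
      using that ab by (simp add: meet_join_distrib)
    finally show ?thesis
      using that ab by (simp add: zero_join meet_closed)
  qed
  have below: "mt c w = c"
    if "c \<in> A" "mt c a = z" "jn c a = jn a b" "w \<in> A" "mt w a = z" "jn w a = jn a b" for c w
  proof -
    have cb: "c = mt c b" using below_b that by simp
    have "jn b (jn w a) = jn w a"
      using that ab by (metis meet_join_absorb join_closed join_comm join_eq_iff_meet_eq)
    then have "mt c b = mt (mt c b) (jn w a)"
      using that ab by (metis meet_closed meet_assoc join_eq_iff_meet_eq join_closed)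
    also have "\<dots> = jn (mt c w) (mt c a)"
      using that ab cb meet_join_distrib by metis
    finally show ?thesis
      using that ab cb by (metis join_zero meet_closed)
  qed
  have d: "df b a \<in> A" "mt (df b a) a = z" "jn (df b a) a = jn a b"
    using ab by (auto simp: diff_closed diff_meet_zero diff_join)
  show ?thesis
    using below[OF c d] below[OF d c] c d meet_comm by metis
qed

lemma diff_le:
  assumes "x \<in> A" "y \<in> A"
  shows "mt (df x y) x = df x y"
proof -
  let ?w = "df x y"
  have w: "?w \<in> A" using assms diff_closed by blast
  have "?w = mt ?w (jn y x)"
    using w assms meet_join_absorb diff_join by metis
  also have "\<dots> = jn (mt ?w y) (mt ?w x)"
    using w assms meet_join_distrib by blast
  also have "mt ?w y = z"
    using assms diff_meet_zero by blast
  finally show ?thesis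
    using w assms zero_join meet_closed by metis
qed

lemma meet_diff_distrib:
  assumes "a \<in> A" "b \<in> A" "d \<in> A"
  shows "mt (df a b) d = df (mt a d) (mt b d)"
proof (rule diff_unique)
  have ab: "df a b \<in> A" using assms diff_closed by blast
  show "mt (mt (df a b) d) (mt b d) = z"
    using meet_meet_distrib[OF ab assms(2,3)] diff_meet_zero[OF assms(2,1)] zero_meet[OF assms(3)]
    by simp
  have "jn (mt (df a b) d) (mt b d) = mt (jn (df a b) b) d"
    using meet_join_distrib_right[OF assms(3) ab assms(2)] by simp
  also have "\<dots> = jn (mt b d) (mt a d)"
    using diff_join[OF assms(2,1)] meet_join_distrib_right[OF assms(3,2,1)] by simp
  finally show "jn (mt (df a b) d) (mt b d) = jn (mt b d) (mt a d)" .
qed (use assms in \<open>auto intro: diff_closed meet_closed\<close>)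

lemma diff_join_distrib:
  assumes "a \<in> A" "b \<in> A" "x \<in> A"
  shows "df (jn a b) x = jn (df a x) (df b x)"
proof (rule sym, rule diff_unique)
  have c: "df a x \<in> A" "df b x \<in> A" using assms by (auto intro: diff_closed)
  show "mt (jn (df a x) (df b x)) x = z"
    using meet_join_distrib_right[OF assms(3) c] diff_meet_zero[OF assms(3,1)]
      diff_meet_zero[OF assms(3,2)] zero_join[OF zero_closed] by simp
  have "jn (jn (df a x) (df b x)) x = jn (jn (df a x) x) (jn (df b x) x)"
    using join_join_distrib[OF c assms(3)] by simp
  also have "\<dots> = jn (jn a x) (jn b x)"
    using diff_join[OF assms(3,1)] diff_join[OF assms(3,2)] join_comm assms by simp
  also have "\<dots> = jn x (jn a b)"
    using join_join_distrib[OF assms] join_comm assms join_closed by simp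
  finally show "jn (jn (df a x) (df b x)) x = jn x (jn a b)" .
qed (use assms in \<open>auto intro: diff_closed join_closed\<close>)

lemma diff_meet_distrib:
  assumes "a \<in> A" "b \<in> A" "x \<in> A"
  shows "df (mt a b) x = mt (df a x) (df b x)"
proof (rule sym, rule diff_unique)
  have c: "df a x \<in> A" "df b x \<in> A" using assms by (auto intro: diff_closed)
  show "mt (mt (df a x) (df b x)) x = z"
    using meet_assoc[OF c assms(3)] meet_comm[OF c(2) assms(3)] diff_meet_zero[OF assms(3,2)]
      meet_zero[OF c(1)] by simp
  have "jn (mt (df a x) (df b x)) x = mt (jn x (df a x)) (jn x (df b x))"
    using join_comm[OF meet_closed[OF c] assms(3)] join_meet_distrib[OF assms(3) c] by simp
  also have "\<dots> = mt (jn x a) (jn x b)"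
    using diff_join[OF assms(3,1)] diff_join[OF assms(3,2)] join_comm assms c by metis
  also have "\<dots> = jn x (mt a b)"
    using join_meet_distrib[OF assms(3,1,2)] by simp
  finally show "jn (mt (df a x) (df b x)) x = jn x (mt a b)" .
qed (use assms in \<open>auto intro: diff_closed meet_closed\<close>)

lemma diff_diff:
  assumes "a \<in> A" "b \<in> A" "c \<in> A"
  shows "df (df a b) c = df a (jn b c)"
proof (rule diff_unique)
  let ?w = "df (df a b) c"
  have cl: "df a b \<in> A" "?w \<in> A" using assms by (auto intro: diff_closed)
  have "mt ?w b = mt (mt ?w (df a b)) b"
    using diff_le[OF cl(1) assms(3)] by simp
  also have "\<dots> = z"
    using meet_assoc[OF cl(2,1) assms(2)] diff_meet_zero[OF assms(2,1)] meet_zero[OF cl(2)] by simp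
  finally have "mt ?w b = z" .
  then show "mt ?w (jn b c) = z"
    using meet_join_distrib[OF cl(2) assms(2,3)] diff_meet_zero[OF assms(3) cl(1)]
      zero_join[OF zero_closed] by simp
  have "jn ?w (jn b c) = jn (jn ?w c) b"
    using assms cl by (metis join_assoc join_comm)
  also have "\<dots> = jn (jn (df a b) b) c"
    using diff_join[OF assms(3) cl(1)] assms cl by (metis join_assoc join_comm)
  also have "\<dots> = jn (jn b c) a"
    using diff_join[OF assms(2,1)] assms by (metis join_assoc join_comm)
  finally show "jn ?w (jn b c) = jn (jn b c) a" .
qed (use assms in \<open>auto intro: diff_closed join_closed\<close>)

lemma diff_diff_distrib:
  assumes "a \<in> A" "b \<in> A" "x \<in> A"
  shows "df (df a b) x = df (df a x) (df b x)"
proof -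
  have "df (df a x) (df b x) = df a (jn x (df b x))"
    using assms diff_diff diff_closed by metis
  also have "jn x (df b x) = jn b x"
    using assms diff_join join_comm diff_closed by metis
  finally show ?thesis
    using assms diff_diff by metis
qed

lemma diff_self: "x \<in> A \<Longrightarrow> df x x = z"
  by (metis diff_unique zero_meet zero_join join_idem zero_closed)

lemma zero_diff: "x \<in> A \<Longrightarrow> df z x = z"
  by (metis diff_unique zero_meet zero_join join_zero zero_closed)

lemma meet_join_diff:
  assumes "y \<in> A" "x \<in> A"
  shows "jn (mt y x) (df y x) = y"
proof -
  have d: "df y x \<in> A" using assms diff_closed by blast
  have "y = mt y (jn x y)"
    using meet_join_absorb[OF assms(1,2)] join_comm[OF assms] by simp
  also have "jn x y = jn x (df y x)"
    using diff_join[OF assms(2,1)] join_comm[OF d assms(2)] by simp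
  also have "mt y (jn x (df y x)) = jn (mt y x) (mt y (df y x))"
    using meet_join_distrib[OF assms(1,2) d] .
  also have "mt y (df y x) = df y x"
    using diff_le[OF assms] meet_comm[OF d assms(1)] by simp
  finally show ?thesis by simp
qed

lemma diff_eq_zero_iff:
  assumes "y \<in> A" "x \<in> A"
  shows "df y x = z \<longleftrightarrow> jn y x = x"
proof
  assume "df y x = z"
  then have "y = mt y x"
    using meet_join_diff[OF assms] join_zero[OF meet_closed[OF assms]] by simp
  then show "jn y x = x"
    using join_eq_iff_meet_eq[OF assms] by simp
next
  assume "jn y x = x"
  then show "df y x = z"
    using diff_unique[OF assms(2,1) zero_closed] zero_meet[OF assms(2)] zero_join[OF assms(2)]
      join_comm[OF assms] by simp
qed

lemma diff_eq_if_sym_diff_le: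
  assumes ab: "a \<in> A" "b \<in> A" and e: "e \<in> A"
    and le: "jn (df a b) e = e" "jn (df b a) e = e"
  shows "df a e = df b e"
proof -
  have split: "df a e = df (mt a b) e" if "a \<in> A" "b \<in> A" "jn (df a b) e = e" for a b
  proof -
    have d: "df a b \<in> A" "mt a b \<in> A" using that diff_closed meet_closed by blast+
    have "df a e = df (jn (mt a b) (df a b)) e"
      using meet_join_diff[OF that(1,2)] by simp
    also have "\<dots> = jn (df (mt a b) e) (df (df a b) e)"
      using diff_join_distrib[OF d(2,1) e] .
    also have "df (df a b) e = z"
      using diff_eq_zero_iff[OF d(1) e] that(3) by simp
    finally show ?thesis
      using join_zero[OF diff_closed[OF d(2) e]] by simp
  qed
  show ?thesis
    using split[OF ab le(1)] split[OF ab(2,1) le(2)] meet_comm[OF ab] by simp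
qed

lemma finite_has_supremum:
  assumes "finite F" "F \<subseteq> C" "C \<subseteq> A" "z \<in> C" "\<forall>x\<in>C. \<forall>y\<in>C. jn x y \<in> C"
  shows "\<exists>E\<in>C. is_supremum A jn F E"
  using assms
proof (induction F rule: finite_induct)
  case empty
  then show ?case
    by (auto simp: is_supremum_def is_upper_bound_def ershov_le_def zero_join)
next
  case (insert c F)
  then obtain E where E: "E \<in> C" "is_supremum A jn F E" by auto
  have cE: "c \<in> A" "E \<in> A" using insert E by auto
  have F_le: "jn c' E = E" if "c' \<in> F" for c'
    using E(2) that unfolding is_supremum_def is_upper_bound_def ershov_le_def by blast
  have E_least: "jn E v = v" if "v \<in> A" "\<forall>c'\<in>F. jn c' v = v" for v
    using E(2) that unfolding is_supremum_def is_upper_bound_def ershov_le_def by blast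
  have "is_supremum A jn (insert c F) (jn c E)"
    unfolding is_supremum_def is_upper_bound_def ershov_le_def
  proof (intro conjI ballI allI impI)
    show "jn c E \<in> A" using cE join_closed by blast
    fix c' assume "c' \<in> insert c F"
    then show "jn c' (jn c E) = jn c E"
    proof
      assume "c' = c"
      then show ?thesis using cE join_assoc join_idem by metis
    next
      assume "c' \<in> F"
      then have "c' \<in> A" "jn c' E = E" using insert F_le by auto
      then show ?thesis using cE join_assoc join_comm by metis
    qed
  next
    fix v assume "v \<in> A \<and> (\<forall>c'\<in>insert c F. jn c' v = v)"
    then show "jn (jn c E) v = v"
      using E_least cE join_assoc by simp
  qed
  then show ?case using insert E by auto
qed

end

lemma eval_trm_closed:
  assumes "z \<in> B" "\<forall>x\<in>B. \<forall>y\<in>B. jn x y \<in> B \<and> mt x y \<in> B \<and> df x y \<in> B"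
    and "set xs \<subseteq> B" "vars_trm t \<subseteq> {..<length xs}" "consts_trm t \<subseteq> B"
  shows "eval_trm jn mt df z xs t \<in> B"
  using assms by (induction t) auto

lemma is_eqn_mono: "is_eqn C n e \<Longrightarrow> C \<subseteq> A \<Longrightarrow> is_eqn A n e"
  by (auto simp: is_eqn_def)

lemma is_eqn_swap: "is_eqn C n (s, t) \<Longrightarrow> is_eqn C n (t, s)"
  by (auto simp: is_eqn_def)

context ershov
begin

abbreviation val :: "'a \<Rightarrow> 'a trm \<Rightarrow> 'a" where
  "val x t \<equiv> eval_trm jn mt df z [x] t"

lemma val_closed:
  "x \<in> A \<Longrightarrow> vars_trm t \<subseteq> {..<1} \<Longrightarrow> consts_trm t \<subseteq> A \<Longrightarrow> val x t \<in> A"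
  using eval_trm_closed[of z A jn mt df "[x]" t] zero_closed join_closed meet_closed diff_closed
  by auto

lemma val_meet_eq:
  assumes "x \<in> A" "y \<in> A" "mt x y = x" "vars_trm t \<subseteq> {..<1}" "consts_trm t \<subseteq> A"
  shows "mt (val x t) x = mt (val y t) x"
  using assms
proof (induction t)
  case (Var i)
  then show ?case by (simp add: meet_idem) (metis meet_comm)
next
  case (Join t1 t2)
  then show ?case
    using meet_join_distrib_right val_closed by auto
next
  case (Meet t1 t2)
  have cl: "val x t1 \<in> A" "val x t2 \<in> A" "val y t1 \<in> A" "val y t2 \<in> A"
    using Meet.prems val_closed by auto
  have "mt (val x t1) x = mt (val y t1) x" "mt (val x t2) x = mt (val y t2) x"
    using Meet by auto
  then show ?case
    using meet_meet_distrib[OF cl(1,2) Meet.prems(1)] meet_meet_distrib[OF cl(3,4) Meet.prems(1)]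
    by simp
next
  case (Diff t1 t2)
  then show ?case
    using meet_diff_distrib val_closed by auto
qed simp_all

lemma val_diff_eq:
  assumes "x \<in> A" "vars_trm t \<subseteq> {..<1}" "consts_trm t \<subseteq> A"
  shows "df (val x t) x = df (val z t) x"
  using assms
proof (induction t)
  case (Var i)
  then show ?case by (simp add: diff_self zero_diff)
next
  case (Join t1 t2)
  then show ?case
    using diff_join_distrib val_closed zero_closed by auto
next
  case (Meet t1 t2)
  then show ?case
    using diff_meet_distrib val_closed zero_closed by auto
next
  case (Diff t1 t2)
  then show ?case
    using diff_diff_distrib val_closed zero_closed by auto
qed simp_all

lemma solset_singleton_iff:
  "[v] \<in> solset A jn mt df z 1 S \<longleftrightarrow> v \<in> A \<and> (\<forall>e\<in>S. val v (fst e) = val v (snd e))"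
  by (simp add: solset_def)

lemma sym_diff_le_solution:
  assumes st: "is_eqn A 1 (s, t)" and v: "v \<in> A" "val v s = val v t"
  shows "jn (df (val z s) (val z t)) v = v"
proof -
  let ?a = "val z s" and ?b = "val z t"
  have ab: "?a \<in> A" "?b \<in> A"
    using st val_closed zero_closed unfolding is_eqn_def by auto
  have "df ?a v = df ?b v"
    using st v val_diff_eq[of v s] val_diff_eq[of v t] unfolding is_eqn_def by auto
  then have "df (df ?a ?b) v = z"
    using diff_diff_distrib[OF ab v(1)] diff_self[OF diff_closed[OF ab(2) v(1)]] by simp
  then show ?thesis
    using diff_eq_zero_iff[OF diff_closed[OF ab] v(1)] by simp
qed

lemma solution_if_sym_diff_le:
  assumes st: "is_eqn A 1 (s, t)" and e: "e \<in> A"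
    and u: "u \<in> A" "jn e u = u" "val u s = val u t"
    and le: "jn (df (val z s) (val z t)) e = e" "jn (df (val z t) (val z s)) e = e"
  shows "val e s = val e t"
proof -
  have terms: "vars_trm s \<subseteq> {..<1}" "consts_trm s \<subseteq> A" "vars_trm t \<subseteq> {..<1}" "consts_trm t \<subseteq> A"
    using st unfolding is_eqn_def by auto
  have eu: "mt e u = e" using join_eq_iff_meet_eq[OF e u(1)] u(2) by simp
  have "mt (val e s) e = mt (val e t) e"
    using val_meet_eq[OF e u(1) eu terms(1,2)] val_meet_eq[OF e u(1) eu terms(3,4)] u(3) by simp
  moreover have "df (val e s) e = df (val e t) e"
    using val_diff_eq[OF e terms(1,2)] val_diff_eq[OF e terms(3,4)]
      diff_eq_if_sym_diff_le[OF val_closed[OF zero_closed terms(1,2)]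
        val_closed[OF zero_closed terms(3,4)] e le] by simp
  ultimately show ?thesis
    using meet_join_diff[OF val_closed[OF e terms(1,2)] e]
      meet_join_diff[OF val_closed[OF e terms(3,4)] e] by metis
qed

definition sym_diffs :: "('a trm \<times> 'a trm) set \<Rightarrow> 'a set" where
  "sym_diffs S = (\<Union>(s, t)\<in>S. {df (val z s) (val z t), df (val z t) (val z s)})"

lemma solution_above_sym_diffs:
  assumes S: "\<forall>e\<in>S. is_eqn A 1 e" and v: "[v] \<in> solset A jn mt df z 1 S"
    and c: "c \<in> sym_diffs S"
  shows "jn c v = v"
proof -
  obtain s t where st: "(s, t) \<in> S"
    and c: "c = df (val z s) (val z t) \<or> c = df (val z t) (val z s)"
    using c unfolding sym_diffs_def by blast
  have eqns: "is_eqn A 1 (s, t)" "is_eqn A 1 (t, s)"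
    using S st is_eqn_swap by blast+
  have "v \<in> A" "val v s = val v t"
    using v st unfolding solset_singleton_iff by force+
  then show ?thesis
    using c sym_diff_le_solution[OF eqns(1)] sym_diff_le_solution[OF eqns(2)] by auto
qed

lemma solution_if_above_sym_diffs:
  assumes S: "\<forall>e\<in>S. is_eqn A 1 e" and u: "[u] \<in> solset A jn mt df z 1 S"
    and x: "x \<in> A" "jn x u = u" "\<forall>c\<in>sym_diffs S. jn c x = x"
  shows "[x] \<in> solset A jn mt df z 1 S"
  unfolding solset_singleton_iff
proof (intro conjI ballI)
  show "x \<in> A" by fact
  fix e assume "e \<in> S"
  moreover obtain s t where st: "e = (s, t)" by fastforce
  ultimately have "(s, t) \<in> S" by simp
  moreover have "u \<in> A" "val u s = val u t"
    using u \<open>(s, t) \<in> S\<close> unfolding solset_singleton_iff by force+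
  ultimately have "val x s = val x t"
    using solution_if_sym_diff_le[of s t x u] S x unfolding sym_diffs_def by blast
  then show "val x (fst e) = val x (snd e)" using st by simp
qed

lemma finite_system_has_least_solution:
  assumes sub: "ershov_subalgebra C A jn mt df z"
    and S: "finite S" "\<forall>e\<in>S. is_eqn C 1 e"
    and u: "[u] \<in> solset A jn mt df z 1 S"
  shows "\<exists>E\<in>C. [E] \<in> solset A jn mt df z 1 S \<and>
           (\<forall>v. [v] \<in> solset A jn mt df z 1 S \<longrightarrow> jn E v = v)"
proof -
  have CA: "C \<subseteq> A" and zC: "z \<in> C"
    and C_closed: "\<forall>x\<in>C. \<forall>y\<in>C. jn x y \<in> C \<and> mt x y \<in> C \<and> df x y \<in> C"
    using sub unfolding ershov_subalgebra_def by auto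
  have S_A: "\<forall>e\<in>S. is_eqn A 1 e"
    using S(2) CA is_eqn_mono by blast
  have "val z s \<in> C" "val z t \<in> C" if "(s, t) \<in> S" for s t
  proof -
    have "is_eqn C 1 (s, t)" using S(2) that by blast
    then show "val z s \<in> C" "val z t \<in> C"
      using eval_trm_closed[OF zC C_closed, of "[z]"] zC unfolding is_eqn_def by auto
  qed
  then have F: "finite (sym_diffs S)" "sym_diffs S \<subseteq> C"
    using S(1) C_closed unfolding sym_diffs_def by auto
  have C_join_closed: "\<forall>x\<in>C. \<forall>y\<in>C. jn x y \<in> C"
    using C_closed by blast
  obtain E where "E \<in> C" and E: "is_supremum A jn (sym_diffs S) E"
    using finite_has_supremum[OF F CA zC C_join_closed] by blast
  have EA: "E \<in> A" and E_ub: "\<forall>c\<in>sym_diffs S. jn c E = E"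
    and E_least: "\<And>v. v \<in> A \<Longrightarrow> \<forall>c\<in>sym_diffs S. jn c v = v \<Longrightarrow> jn E v = v"
    using E unfolding is_supremum_def is_upper_bound_def ershov_le_def by auto
  have E_below: "jn E v = v" if v: "[v] \<in> solset A jn mt df z 1 S" for v
    using E_least solution_above_sym_diffs[OF S_A v] v unfolding solset_singleton_iff by blast
  have "[E] \<in> solset A jn mt df z 1 S"
    using solution_if_above_sym_diffs[OF S_A u EA E_below[OF u] E_ub] .
  with \<open>E \<in> C\<close> E_below show ?thesis by blast
qed

end

definition ub_system :: "'a set \<Rightarrow> ('a trm \<times> 'a trm) set" where
  "ub_system X = (\<lambda>c. (Join (Cst c) (Var 0), Var 0)) ` X"

lemma ub_system_eqns: "X \<subseteq> C \<Longrightarrow> e \<in> ub_system X \<Longrightarrow> is_eqn C 1 e"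
  by (auto simp: ub_system_def is_eqn_def)

lemma solset_ub_system:
  "[v] \<in> solset A jn mt df z 1 (ub_system X) \<longleftrightarrow> is_upper_bound A jn X v"
  by (auto simp: solset_def ub_system_def is_upper_bound_def ershov_le_def)

theorem mainTheorem7:
  fixes A C :: "'a set" and jn mt df :: "'a \<Rightarrow> 'a \<Rightarrow> 'a" and z :: 'a
  assumes "ershov_algebra A jn mt df z"
    and "ershov_subalgebra C A jn mt df z"
    and "weakly_eq_noetherian A C jn mt df z"
  shows "\<forall>X. X \<subseteq> C \<and> (\<exists>u. is_upper_bound A jn X u) \<longrightarrow>
           (\<exists>s\<in>C. is_supremum A jn X s)"
proof (intro allI impI, elim conjE exE)
  fix X u assume "X \<subseteq> C" and u: "is_upper_bound A jn X u"
  interpret ershov A jn mt df z by (rule ershov.intro) fact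
  obtain S where S: "finite S" "\<forall>e\<in>S. is_eqn C 1 e"
    and same: "solset A jn mt df z 1 (ub_system X) = solset A jn mt df z 1 S"
    using assms(3)[unfolded weakly_eq_noetherian_def, rule_format,
        OF ub_system_eqns[OF \<open>X \<subseteq> C\<close>]] by blast
  have "[u] \<in> solset A jn mt df z 1 S"
    using u unfolding same[symmetric] solset_ub_system .
  then obtain E where "E \<in> C" and E: "[E] \<in> solset A jn mt df z 1 S"
    and least: "\<forall>v. [v] \<in> solset A jn mt df z 1 S \<longrightarrow> jn E v = v"
    using finite_system_has_least_solution[OF assms(2) S] by blast
  have "is_upper_bound A jn X E"
    using E unfolding same[symmetric] solset_ub_system .
  moreover have "ershov_le jn E v" if "is_upper_bound A jn X v" for v
    using that least unfolding ershov_le_def same[symmetric] solset_ub_system by blast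
  ultimately have "is_supremum A jn X E"
    unfolding is_supremum_def by blast
  with \<open>E \<in> C\<close> show "\<exists>s\<in>C. is_supremum A jn X s" by blast
qed

end
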